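(* Suppose $K$ satisfies (K1) and (K2). There is a constant $C\ge1$, depending only on $d$, $s$, $\lambda$ and $\Lambda$, such that for every $\varepsilon\in(0,1)$ and every ground state $u$ of $H^{(\varepsilon)}$, the set $E(u,\varepsilon):=\{x\in\mathbb R^d:\bar u_\varepsilon(x)=1\}$ satisfies $$\mathrm{Per}_K(E(u,\varepsilon);\mathring Q_R)\le C\,R^{d-s}\quad\text{for every } R\ge1.$$
   Context: $d\ge2$; $|\cdot|$ is the $\ell^1$ norm, $|x|_\infty=\max_n|x_n|$; $Q_r(x):=\{y\in\mathbb R^d:|y-x|_\infty\le r\}$, $Q_r=Q_r(0)$, $\mathring Q$ the interior. $K:\mathbb R^d\times\mathbb R^d\to[0,+\infty]$ measurable with (K1) $K(x,y)=K(y,x)$ a.e.; (K2) $\lambda|x-y|^{-d-s}\le K(x,y)\le\Lambda|x-y|^{-d-s}$ a.e., for some $s\in(0,1)$, $\Lambda\ge\lambda>0$. $L_K(A,B):=\int_A\int_BK$; $\mathrm{Per}_K(E;\Omega):=L_K(E\cap\Omega,\Omega\setminus E)+L_K(E\cap\Omega,\mathbb R^d\setminus(E\cup\Omega))+L_K(E\setminus\Omega,\Omega\setminus E)$. For $\varepsilon>0$: $J^{(\varepsilon)}_{ij}:=\varepsilon^{-d+s}\int_{Q_{\varepsilon/2}(\varepsilon i)}\int_{Q_{\varepsilon/2}(\varepsilon j)}K(x,y)\,dx\,dy$ if $i\ne j$, $J^{(\varepsilon)}_{ii}:=0$. Configurations are maps $u:\mathbb Z^d\to\{-1,1\}$; for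 finite $\Gamma$, $H^{(\varepsilon)}_\Gamma(u):=\sum_{(i,j)\in\mathbb Z^{2d}\setminus(\mathbb Z^d\setminus\Gamma)^2}J^{(\varepsilon)}_{ij}(1-u_iu_j)$; $u$ is a ground state of $H^{(\varepsilon)}$ if $H^{(\varepsilon)}_\Gamma(u)\le H^{(\varepsilon)}_\Gamma(v)$ for every finite $\Gamma$ and every $v$ agreeing with $u$ outside $\Gamma$. The extension $\bar u_\varepsilon$ is defined a.e. by $\bar u_\varepsilon(x):=u_i$ where $i$ is the unique site with $x\in\mathring Q_{\varepsilon/2}(\varepsilon i)$. *)

theory Defs
  imports "HOL-Analysis.Analysis"
begin

text \<open>Points of R^d are real^'n, lattice sites of Z^d are int^'n, d = CARD('n).\<close>

definition l1norm :: "real^'n \<Rightarrow> real" where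
  "l1norm x = (\<Sum>k\<in>UNIV. \<bar>x$k\<bar>)"

definition cube :: "real \<Rightarrow> real^'n \<Rightarrow> (real^'n) set" where
  "cube r x = {y. \<forall>k. \<bar>y$k - x$k\<bar> \<le> r}"

definition ocube :: "real \<Rightarrow> real^'n \<Rightarrow> (real^'n) set" where
  "ocube r x = {y. \<forall>k. \<bar>y$k - x$k\<bar> < r}"

definition site :: "real \<Rightarrow> int^'n \<Rightarrow> real^'n" where
  "site \<epsilon> i = (\<chi> k. \<epsilon> * of_int (i$k))"

definition LK :: "(real^'n \<Rightarrow> real^'n \<Rightarrow> ennreal) \<Rightarrow> (real^'n) set \<Rightarrow> (real^'n) set \<Rightarrow> ennreal" where
  "LK K A B = (\<integral>\<^sup>+ p. K (fst p) (snd p) * indicator (A \<times> B) p \<partial>lebesgue)"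

definition PerK :: "(real^'n \<Rightarrow> real^'n \<Rightarrow> ennreal) \<Rightarrow> (real^'n) set \<Rightarrow> (real^'n) set \<Rightarrow> ennreal" where
  "PerK K E \<Omega> = LK K (E \<inter> \<Omega>) (\<Omega> - E) + LK K (E \<inter> \<Omega>) (UNIV - (E \<union> \<Omega>)) + LK K (E - \<Omega>) (\<Omega> - E)"

definition K1 :: "(real^'n \<Rightarrow> real^'n \<Rightarrow> ennreal) \<Rightarrow> bool" where
  "K1 K \<longleftrightarrow> (AE p in lebesgue. K (fst p) (snd p) = K (snd p) (fst p))"

definition K2 :: "real \<Rightarrow> real \<Rightarrow> real \<Rightarrow> (real^'n \<Rightarrow> real^'n \<Rightarrow> ennreal) \<Rightarrow> bool" where
  "K2 s lam Lam K \<longleftrightarrow> (AE p in lebesgue.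
      ennreal (lam * l1norm (fst p - snd p) powr (- real CARD('n) - s)) \<le> K (fst p) (snd p) \<and>
      K (fst p) (snd p) \<le> ennreal (Lam * l1norm (fst p - snd p) powr (- real CARD('n) - s)))"

definition Jeps :: "(real^'n \<Rightarrow> real^'n \<Rightarrow> ennreal) \<Rightarrow> real \<Rightarrow> real \<Rightarrow> int^'n \<Rightarrow> int^'n \<Rightarrow> ennreal" where
  "Jeps K s \<epsilon> i j = (if i = j then 0 else
     ennreal (\<epsilon> powr (- real CARD('n) + s)) * LK K (cube (\<epsilon>/2) (site \<epsilon> i)) (cube (\<epsilon>/2) (site \<epsilon> j)))"

definition Hloc :: "(real^'n \<Rightarrow> real^'n \<Rightarrow> ennreal) \<Rightarrow> real \<Rightarrow> real \<Rightarrow> (int^'n) set \<Rightarrow> (int^'n \<Rightarrow> real) \<Rightarrow> ennreal" where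
  "Hloc K s \<epsilon> \<Gamma> u = (\<Sum>\<^sub>\<infinity> p \<in> {p. fst p \<in> \<Gamma> \<or> snd p \<in> \<Gamma>}.
       Jeps K s \<epsilon> (fst p) (snd p) * ennreal (1 - u (fst p) * u (snd p)))"

definition spin_config :: "(int^'n \<Rightarrow> real) \<Rightarrow> bool" where
  "spin_config u \<longleftrightarrow> (\<forall>i. u i = 1 \<or> u i = -1)"

definition ground_state :: "(real^'n \<Rightarrow> real^'n \<Rightarrow> ennreal) \<Rightarrow> real \<Rightarrow> real \<Rightarrow> (int^'n \<Rightarrow> real) \<Rightarrow> bool" where
  "ground_state K s \<epsilon> u \<longleftrightarrow> spin_config u \<and>
     (\<forall>\<Gamma> v. finite \<Gamma> \<longrightarrow> spin_config v \<longrightarrow> (\<forall>i. i \<notin> \<Gamma> \<longrightarrow> v i = u i) \<longrightarrow>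
        Hloc K s \<epsilon> \<Gamma> u \<le> Hloc K s \<epsilon> \<Gamma> v)"

text \<open>E(u,eps) = {x. ubar_eps x = 1}, ubar_eps defined on the union of open cells.\<close>
definition Eset :: "(int^'n \<Rightarrow> real) \<Rightarrow> real \<Rightarrow> (real^'n) set" where
  "Eset u \<epsilon> = (\<Union>i\<in>{i. u i = 1}. ocube (\<epsilon>/2) (site \<epsilon> i))"

end

theory Submission
  imports Defs
begin

(* Compare u with the competitor obtained by setting all spins to +1 in a lattice box Gamma whose
   cells cover Q_R; the union of these cells is a cube Q_a with a <= 2R.

   Every interaction counted in Per_K(E; Q_R) joins a point of E to a point outside E, at least
   one of them in a cell of Gamma. Covering such pairs of points by pairs of cells with opposite
   spins gives Per_K(E; Q_R) <= 3 eps^(d-s) H_Gamma(u). Since u is a ground state,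
   H_Gamma(u) <= H_Gamma(v), and the only interactions of v counted in H_Gamma(v) are those across
   the boundary of Q_a. By the upper bound in (K2) they cost at most Lambda times the integral of
   |x-y|^(-d-s) over the pairs separated by the boundary of Q_a: for fixed x in Q_a the inner
   integral is O(dist(x, boundary of Q_a)^-s), which is integrable over Q_a because s < 1, and the
   total is O(a^(d-s)) = O(R^(d-s)). *)

section \<open>Cubes and lattice cells\<close>

abbreviation cell :: "real \<Rightarrow> int^'n \<Rightarrow> (real^'n) set" where
  "cell e i \<equiv> cube (e/2) (site e i)"

abbreviation open_cell :: "real \<Rightarrow> int^'n \<Rightarrow> (real^'n) set" where
  "open_cell e i \<equiv> ocube (e/2) (site e i)"

abbreviation frac_kernel :: "real \<Rightarrow> real^'n \<Rightarrow> real" where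
  "frac_kernel s z \<equiv> l1norm z powr (- real CARD('n) - s)"

lemma cube_eq_cbox: "cube r x = cbox (x - (\<chi> k. r)) (x + (\<chi> k. r))"
  by (auto simp: cube_def mem_box_cart abs_le_iff algebra_simps)

lemma ocube_eq_box: "ocube r x = box (x - (\<chi> k. r)) (x + (\<chi> k. r))"
  by (auto simp: ocube_def mem_box_cart abs_less_iff algebra_simps)

lemma closed_cube [intro, simp]: "closed (cube r x)"
  by (simp add: cube_eq_cbox closed_cbox)

lemma open_ocube [intro, simp]: "open (ocube r x)"
  by (simp add: ocube_eq_box open_box)

lemma ocube_subset_cube: "ocube r x \<subseteq> cube r x"
  by (auto simp: ocube_def cube_def less_imp_le)

lemma cube_mono: "r \<le> r' \<Longrightarrow> cube r x \<subseteq> cube r' x"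
  by (auto simp: cube_def intro: order_trans)

lemma prod_Basis_inner_const:
  fixes v :: "real^'n"
  assumes "\<And>k. v$k = c"
  shows "(\<Prod>b\<in>Basis. v \<bullet> b) = c ^ CARD('n)"
proof -
  have "(\<Prod>b\<in>Basis. v \<bullet> b) = (\<Prod>b\<in>(Basis::(real^'n) set). c)"
    by (rule prod.cong) (auto simp: Basis_vec_def cart_eq_inner_axis[symmetric] inner_axis assms)
  then show ?thesis by simp
qed

lemma emeasure_cube:
  "r \<ge> 0 \<Longrightarrow> emeasure lborel (cube r (x::real^'n)) = ennreal ((2*r) ^ CARD('n))"
  unfolding cube_eq_cbox emeasure_lborel_cbox_eq
  by (subst prod_Basis_inner_const[where c="2*r"]) (auto simp: Basis_vec_def inner_axis)

lemma emeasure_ocube: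
  "r \<ge> 0 \<Longrightarrow> emeasure lborel (ocube r (x::real^'n)) = ennreal ((2*r) ^ CARD('n))"
  unfolding ocube_eq_box emeasure_lborel_box_eq
  by (subst prod_Basis_inner_const[where c="2*r"]) (auto simp: Basis_vec_def inner_axis)

lemma infnorm_cart_Max: "infnorm (x::real^'n) = Max (range (\<lambda>k. \<bar>x$k\<bar>))"
  unfolding infnorm_cart by (simp add: cSup_eq_Max full_SetCompr_eq)

lemma mem_ocube_0_iff_infnorm: "x \<in> ocube a 0 \<longleftrightarrow> infnorm x < a"
  by (simp add: ocube_def infnorm_cart_Max)

lemma cube_boundary_null: "cube a (0::real^'n) - ocube a 0 \<in> null_sets lborel"
proof (cases "a \<ge> 0")
  case True
  have "emeasure lborel (cube a (0::real^'n) - ocube a 0) =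
      emeasure lborel (cube a (0::real^'n)) - emeasure lborel (ocube a (0::real^'n))"
    using ocube_subset_cube[of a 0] True by (intro emeasure_Diff) (auto simp: emeasure_ocube borel_open)
  then show ?thesis
    using True by (auto simp: emeasure_cube emeasure_ocube borel_closed borel_open)
next
  case False
  then have "cube a (0::real^'n) = {}" by (auto simp: cube_def)
  then show ?thesis by simp
qed

(* The hyperplanes on which neighbouring closed cells meet. Off them the open cells used in
   Eset and the closed cells used in Jeps see the same points. *)
definition grid_faces :: "real \<Rightarrow> (real^'n) set" where
  "grid_faces e = {y. \<exists>k. \<exists>m::int. y$k = e * (of_int m + 1/2)}"

lemma AE_off_grid_faces:
  "AE p in lebesgue. fst p \<notin> grid_faces e \<and> snd (p::(real^'n) \<times> (real^'n)) \<notin> grid_faces e"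
proof -
  have "{p::(real^'n) \<times> (real^'n). fst p \<in> grid_faces e \<or> snd p \<in> grid_faces e} =
      (\<Union>k. \<Union>m::int. {p. (axis k 1, 0) \<bullet> p = e * (of_int m + 1/2)}
                    \<union> {p. (0, axis k 1) \<bullet> p = e * (of_int m + 1/2)})"
    unfolding grid_faces_def by (auto simp: inner_axis') blast+
  also have "\<dots> \<in> null_sets lebesgue"
    by (intro null_sets_UN' null_sets.Un negligible_hyperplane[THEN negligible_iff_null_sets[THEN iffD1]])
      (auto simp: zero_prod_def)
  finally show ?thesis
    by (rule AE_I') auto
qed

lemma ex_open_cell:
  fixes y :: "real^'n"
  assumes "0 < e" "y \<notin> grid_faces e"
  shows "\<exists>j. y \<in> open_cell e j"
proof -
  define j :: "int^'n" where "j = (\<chi> k. \<lfloor>y$k / e + 1/2\<rfloor>)"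
  have "\<bar>y$k - e * of_int (j$k)\<bar> < e/2" for k
  proof -
    have "j$k = \<lfloor>y$k / e + 1/2\<rfloor>" by (simp add: j_def)
    then have "of_int (j$k) \<le> y$k/e + 1/2" "y$k/e + 1/2 < of_int (j$k) + 1"
      by linarith+
    then have "e * (of_int (j$k) - 1/2) \<le> y$k" "y$k < e * (of_int (j$k) + 1/2)"
      using assms(1) by (auto simp: field_simps)
    moreover have "y$k \<noteq> e * (of_int (j$k - 1) + 1/2)"
      using assms(2) unfolding grid_faces_def by blast
    ultimately have "e * of_int (j$k) - e/2 < y$k" "y$k < e * of_int (j$k) + e/2"
      by (auto simp: algebra_simps order_less_le)
    then show ?thesis
      by arith
  qed
  then show ?thesis by (auto simp: ocube_def site_def)
qed

lemma cell_off_grid_faces: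
  assumes "x \<in> cell e i" "x \<notin> grid_faces e"
  shows "x \<in> open_cell e i"
proof -
  have "\<bar>x$k - e * of_int (i$k)\<bar> < e/2" for k
  proof -
    have "\<bar>x$k - e * of_int (i$k)\<bar> \<le> e/2" using assms(1) by (auto simp: cube_def site_def)
    moreover have "x$k \<noteq> e * (of_int (i$k) + 1/2)" "x$k \<noteq> e * (of_int (i$k - 1) + 1/2)"
      using assms(2) unfolding grid_faces_def by blast+
    then have "x$k - e * of_int (i$k) \<noteq> e/2" "x$k - e * of_int (i$k) \<noteq> -(e/2)"
      by (auto simp: algebra_simps)
    ultimately show ?thesis by arith
  qed
  then show ?thesis by (auto simp: ocube_def site_def)
qed

lemma open_cell_cell_unique:
  assumes "0 < e" "x \<in> open_cell e i" "x \<in> cell e j"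
  shows "i = j"
unfolding vec_eq_iff
proof
  fix k
  have "\<bar>x$k - e * of_int (i$k)\<bar> < e/2" "\<bar>x$k - e * of_int (j$k)\<bar> \<le> e/2"
    using assms(2,3) by (auto simp: ocube_def cube_def site_def)
  then have "\<bar>e * of_int (i$k) - e * of_int (j$k)\<bar> < e"
    by arith
  moreover have "\<bar>e * of_int (i$k) - e * of_int (j$k)\<bar> = e * \<bar>of_int (i$k - j$k)\<bar>"
    using assms(1) by (simp add: abs_mult right_diff_distrib[symmetric])
  ultimately have "e * \<bar>of_int (i$k - j$k)\<bar> < e * 1"
    by simp
  then have "\<bar>i$k - j$k\<bar> < 1"
    using assms(1) mult_less_cancel_left_pos by fastforce
  then show "i$k = j$k" by simp
qed

section \<open>Integrals of the fractional kernel\<close>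

lemma ex_dyadic_scale_above:
  fixes d r :: real
  assumes "0 < d" "d < r"
  shows "\<exists>k::nat. 2^k * d < r \<and> r \<le> 2^(k+1) * d"
proof -
  obtain N :: nat where "r / d < 2^N" using real_arch_pow[of 2 "r/d"] by auto
  then have ex: "\<exists>k. r \<le> 2^(k+1) * d" using assms by (auto simp: field_simps intro!: exI[of _ N])
  define k where "k = (LEAST k. r \<le> 2^(k+1) * d)"
  have "r \<le> 2^(k+1) * d" unfolding k_def by (rule LeastI_ex[OF ex])
  moreover have "2^k * d < r"
  proof (cases k)
    case (Suc k')
    then have "\<not> r \<le> 2^(k'+1) * d" using not_less_Least[of k' "\<lambda>k. r \<le> 2^(k+1) * d"] k_def by auto
    then show ?thesis using Suc by simp
  qed (use assms in simp)
  ultimately show ?thesis by blast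
qed

lemma ex_dyadic_scale_below:
  fixes d a :: real
  assumes "0 < d" "d \<le> a"
  shows "\<exists>k::nat. a / 2^(k+1) < d \<and> d \<le> a / 2^k"
proof -
  obtain N :: nat where "a / d < 2^N" using real_arch_pow[of 2 "a/d"] by auto
  then have ex: "\<exists>k. a < 2^(k+1) * d" using assms by (auto simp: field_simps intro!: exI[of _ N])
  define k where "k = (LEAST k. a < 2^(k+1) * d)"
  have "a < 2^(k+1) * d" unfolding k_def by (rule LeastI_ex[OF ex])
  moreover have "d \<le> a / 2^k"
  proof (cases k)
    case (Suc k')
    then have "\<not> a < 2^(k'+1) * d" using not_less_Least[of k' "\<lambda>k. a < 2^(k+1) * d"] k_def by auto
    then show ?thesis using Suc by (simp add: field_simps)
  qed (use assms in simp)
  ultimately show ?thesis by (auto simp: field_simps)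
qed

lemma abs_le_l1norm: "\<bar>x$k\<bar> \<le> l1norm x"
  unfolding l1norm_def by (rule member_le_sum) auto

lemma l1norm_minus_commute: "l1norm (x - y) = l1norm (y - x)"
  unfolding l1norm_def by (simp add: abs_minus_commute)

lemma borel_measurable_l1norm [measurable]: "(l1norm :: real^'n \<Rightarrow> real) \<in> borel_measurable borel"
  unfolding l1norm_def[abs_def] by measurable

lemma borel_measurable_l1norm_diff [measurable]:
  "(\<lambda>p::(real^'n) \<times> (real^'n). l1norm (fst p - snd p)) \<in> borel_measurable borel"
proof -
  have "(\<lambda>p::(real^'n) \<times> (real^'n). fst p - snd p) \<in> borel_measurable borel"
    by (intro borel_measurable_continuous_onI continuous_intros)
  then show ?thesis
    using measurable_compose borel_measurable_l1norm by blast
qed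

lemma suminf_ennreal_geometric:
  fixes c q :: real
  assumes "0 \<le> c" "0 \<le> q" "q < 1"
  shows "(\<Sum>n. ennreal (c * q^n)) = ennreal (c / (1 - q))"
proof -
  have "(\<lambda>n. c * q^n) sums (c * (1 / (1 - q)))"
    using assms by (intro sums_mult geometric_sums) simp
  then show ?thesis
    using assms by (subst suminf_ennreal_eq) auto
qed

lemma ennreal_le_suminf: "(f k :: ennreal) \<le> (\<Sum>n. f n)"
  using sum_le_suminf[OF summableI, of "{k}" f] by simp

lemma tail_shell_term:
  fixes dl s :: real
  assumes "0 < dl"
  shows "(2^n * dl) powr (- real CARD('n) - s) * (2 * (2^(n+1) * dl)) ^ CARD('n)
        = 4^CARD('n) * dl powr (-s) * (2 powr (-s))^n"
proof -
  define t where "t = 2^n * dl"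
  have t: "t > 0" using assms by (simp add: t_def)
  have "(2 * (2^(n+1) * dl)) ^ CARD('n) = 4^CARD('n) * t powr (real CARD('n))"
    using t by (simp add: t_def power_mult_distrib powr_realpow)
  then have "(2^n * dl) powr (- real CARD('n) - s) * (2 * (2^(n+1) * dl)) ^ CARD('n)
      = 4^CARD('n) * t powr (-s)"
    by (simp add: t_def[symmetric] powr_add[symmetric])
  also have "t powr (-s) = dl powr (-s) * (2 powr (-s))^n"
    using assms by (simp add: t_def powr_mult powr_realpow[symmetric] powr_powr powr_power mult.commute)
  finally show ?thesis by simp
qed

lemma frac_kernel_le_shell_sum:
  fixes x y :: "real^'n" and dl s :: real
  assumes "0 < dl" "0 < s"
  shows "indicator (- cube dl x) y * ennreal (frac_kernel s (x - y))
    \<le> (\<Sum>n. indicator (cube (2^(n+1) * dl) x) y * ennreal ((2^n * dl) powr (- real CARD('n) - s)))"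
proof (cases "y \<in> cube dl x")
  case False
  define r where "r = l1norm (x - y)"
  have r: "\<bar>y$k - x$k\<bar> \<le> r" for k
    unfolding r_def using abs_le_l1norm[of "x - y" k] by (simp add: abs_minus_commute)
  with False have "dl < r" by (auto simp: cube_def not_le intro: less_le_trans)
  then obtain k where k: "2^k * dl < r" "r \<le> 2^(k+1) * dl"
    using ex_dyadic_scale_above[OF assms(1)] by blast
  have "y \<in> cube (2^(k+1) * dl) x"
    using r k(2) by (auto simp: cube_def intro: order_trans)
  moreover have "r powr (- real CARD('n) - s) \<le> (2^k * dl) powr (- real CARD('n) - s)"
    using k assms by (intro powr_mono2') auto
  ultimately have "indicator (- cube dl x) y * ennreal (frac_kernel s (x - y))
      \<le> indicator (cube (2^(k+1) * dl) x) y * ennreal ((2^k * dl) powr (- real CARD('n) - s))"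
    using False by (simp add: r_def[symmetric] ennreal_leI)
  then show ?thesis using ennreal_le_suminf by (rule order_trans)
qed simp

(* Split the complement of Q_dl(x) into the dyadic shells Q_(2^(n+1) dl)(x) - Q_(2^n dl)(x), on
   which the kernel is at most (2^n dl)^(-d-s): the shell contributions form a geometric series. *)
lemma frac_kernel_tail_integral:
  fixes x :: "real^'n" and dl s :: real
  assumes "0 < dl" "0 < s"
  shows "(\<integral>\<^sup>+y. indicator (- cube dl x) y * ennreal (frac_kernel s (x - y)) \<partial>lborel)
         \<le> ennreal (4^CARD('n) / (1 - 2 powr (-s)) * dl powr (-s))"
proof -
  define g where "g n y = indicator (cube (2^(n+1) * dl) x) y * ennreal ((2^n * dl) powr (- real CARD('n) - s))" for n y
  have pointwise: "indicator (- cube dl x) y * ennreal (frac_kernel s (x - y)) \<le> (\<Sum>n. g n y)" for y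
    unfolding g_def using assms by (rule frac_kernel_le_shell_sum)
  have "(\<integral>\<^sup>+y. indicator (- cube dl x) y * ennreal (frac_kernel s (x - y)) \<partial>lborel)
        \<le> (\<integral>\<^sup>+y. (\<Sum>n. g n y) \<partial>lborel)"
    by (intro nn_integral_mono pointwise)
  also have "\<dots> = (\<Sum>n. \<integral>\<^sup>+y. g n y \<partial>lborel)"
    by (rule nn_integral_suminf) (simp add: g_def borel_closed)
  also have "\<dots> = (\<Sum>n. ennreal (4^CARD('n) * dl powr (-s) * (2 powr (-s))^n))"
  proof (rule suminf_cong)
    fix n
    have "(\<integral>\<^sup>+y. g n y \<partial>lborel)
        = ennreal ((2^n * dl) powr (- real CARD('n) - s)) * emeasure lborel (cube (2^(n+1) * dl) x)"
      unfolding g_def by (subst mult.commute, rule nn_integral_cmult_indicator) (simp add: borel_closed)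
    also have "\<dots> = ennreal ((2^n * dl) powr (- real CARD('n) - s) * (2 * (2^(n+1) * dl)) ^ CARD('n))"
      using assms by (subst emeasure_cube) (auto simp: ennreal_mult)
    finally show "(\<integral>\<^sup>+y. g n y \<partial>lborel) = ennreal (4^CARD('n) * dl powr (-s) * (2 powr (-s))^n)"
      by (simp only: tail_shell_term[OF assms(1)])
  qed
  also have "\<dots> = ennreal (4^CARD('n) / (1 - 2 powr (-s)) * dl powr (-s))"
    using assms by (subst suminf_ennreal_geometric) (auto simp: powr_less_one)
  finally show ?thesis .
qed

lemma emeasure_cube_shell:
  fixes a t :: real
  assumes "0 < a" "0 \<le> t" "t \<le> 1"
  shows "emeasure lborel (cube a (0::real^'n) - ocube (a - a*t) 0) \<le> ennreal ((2*a)^CARD('n) * CARD('n) * t)"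
proof -
  let ?d = "CARD('n)"
  have at: "0 \<le> a - a*t" "0 \<le> a*t" using assms by (simp_all add: mult_le_cancel_left1)
  have sub: "ocube (a - a*t) (0::real^'n) \<subseteq> cube a 0"
    using ocube_subset_cube cube_mono[of "a - a*t" a] at by fastforce
  have "emeasure lborel (cube a (0::real^'n) - ocube (a - a*t) 0)
      = emeasure lborel (cube a (0::real^'n)) - emeasure lborel (ocube (a - a*t) (0::real^'n))"
    using sub at by (intro emeasure_Diff) (auto simp: emeasure_ocube borel_closed borel_open)
  also have "\<dots> = ennreal ((2*a)^?d - (2*(a - a*t))^?d)"
    using assms at by (simp add: emeasure_cube emeasure_ocube ennreal_minus)
  also have "\<dots> \<le> ennreal ((2*a)^?d * ?d * t)"
  proof (rule ennreal_leI)
    have "1 - ?d * t \<le> (1 - t)^?d"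
      using Bernoulli_inequality[of "-t" ?d] assms by simp
    then have "(2*a)^?d * (1 - ?d * t) \<le> (2*a)^?d * (1-t)^?d"
      using assms by (intro mult_left_mono) auto
    moreover have "(2*(a - a*t))^?d = (2*a)^?d * (1-t)^?d"
      by (simp only: power_mult_distrib[symmetric] right_diff_distrib mult.assoc mult_1_right)
    ultimately show "(2*a)^?d - (2*(a - a*t))^?d \<le> (2*a)^?d * ?d * t"
      by (simp add: algebra_simps)
  qed
  finally show ?thesis .
qed

lemma boundary_shell_term:
  fixes a s c :: real
  assumes "0 < a"
  shows "c * (a / 2^(k+1)) powr (-s) * ((2*a)^CARD('n) * CARD('n) * (1/2^k))
       = (c * 2^CARD('n) * 2 powr s * CARD('n) * a powr (real CARD('n) - s)) * (2 powr (s - 1))^k"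
proof -
  have "((2::real) powr (real k + 1)) powr s = 2 powr (s + real k * s)"
    by (simp add: powr_powr algebra_simps)
  also have "\<dots> = 2 powr s * (2 powr s)^k"
    by (simp add: powr_add powr_power mult.commute)
  finally have scale: "(a / 2^(k+1)) powr (-s) = a powr (-s) * 2 powr s * (2 powr s)^k"
    using powr_realpow[of 2 "k+1"] by (simp add: powr_divide powr_minus_divide add.commute)
  have cube: "(2*a)^CARD('n) = 2^CARD('n) * a powr (real CARD('n))"
    using assms by (simp add: power_mult_distrib powr_realpow)
  have ratio: "(2 powr s)^k * (1/2^k) = (2 powr (s - 1))^k"
    by (simp add: powr_diff power_divide)
  have exponent: "a powr (-s) * a powr (real CARD('n)) = a powr (real CARD('n) - s)"
    by (simp add: powr_add[symmetric])
  show ?thesis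
    unfolding scale cube ratio[symmetric] exponent[symmetric] by (simp add: ac_simps)
qed

lemma boundary_distance_le_shell_sum:
  fixes x :: "real^'n" and a s c :: real
  assumes "0 < a" "0 < s" "0 \<le> c"
  shows "indicator (ocube a 0) x * ennreal (c * (a - infnorm x) powr (-s))
    \<le> (\<Sum>k. indicator (cube a 0 - ocube (a - a*(1/2^k)) 0) x * ennreal (c * (a/2^(k+1)) powr (-s)))"
proof (cases "x \<in> ocube a 0")
  case True
  have "0 < a - infnorm x" "a - infnorm x \<le> a"
    using True by (auto simp: mem_ocube_0_iff_infnorm infnorm_pos_le)
  then obtain k where k: "a / 2^(k+1) < a - infnorm x" "a - infnorm x \<le> a / 2^k"
    using ex_dyadic_scale_below by blast
  have "c * (a - infnorm x) powr (-s) \<le> c * (a / 2^(k+1)) powr (-s)"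
    using k assms by (intro mult_left_mono powr_mono2') auto
  moreover have "x \<in> cube a 0" using True ocube_subset_cube by blast
  ultimately have "indicator (ocube a 0) x * ennreal (c * (a - infnorm x) powr (-s))
      \<le> indicator (cube a 0 - ocube (a - a*(1/2^k)) 0) x * ennreal (c * (a/2^(k+1)) powr (-s))"
    using True k by (simp add: mem_ocube_0_iff_infnorm ennreal_leI)
  then show ?thesis using ennreal_le_suminf by (rule order_trans)
qed simp

(* Split Q_a into the shells where a - |x|_inf lies in (a/2^(k+1), a/2^k]; the k-th shell has
   measure O(a^d 2^-k) and the integrand is O((a/2^k)^-s), so the series converges because s < 1. *)
lemma boundary_distance_integral:
  fixes a s c :: real
  assumes "0 < a" "0 < s" "s < 1" "0 \<le> c"
  shows "(\<integral>\<^sup>+x. indicator (ocube a (0::real^'n)) x * ennreal (c * (a - infnorm x) powr (-s)) \<partial>lborel)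
    \<le> ennreal (c * 2^CARD('n) * 2 powr s * CARD('n) * a powr (real CARD('n) - s) / (1 - 2 powr (s - 1)))"
proof -
  define c' where "c' = c * 2^CARD('n) * 2 powr s * CARD('n) * a powr (real CARD('n) - s)"
  define sh where "sh k = cube a (0::real^'n) - ocube (a - a*(1/2^k)) 0" for k :: nat
  define g where "g k x = indicator (sh k) x * ennreal (c * (a/2^(k+1)) powr (-s))" for k x
  have sh_sets [measurable]: "sh k \<in> sets borel" for k
    unfolding sh_def by (intro sets.Diff) (auto simp: borel_closed borel_open)
  have pointwise: "indicator (ocube a (0::real^'n)) x * ennreal (c * (a - infnorm x) powr (-s)) \<le> (\<Sum>k. g k x)" for x
    unfolding g_def sh_def using assms by (intro boundary_distance_le_shell_sum) auto
  have "(\<integral>\<^sup>+x. indicator (ocube a (0::real^'n)) x * ennreal (c * (a - infnorm x) powr (-s)) \<partial>lborel)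
        \<le> (\<integral>\<^sup>+x. (\<Sum>k. g k x) \<partial>lborel)"
    by (intro nn_integral_mono pointwise)
  also have "\<dots> = (\<Sum>k. \<integral>\<^sup>+x. g k x \<partial>lborel)"
    by (rule nn_integral_suminf) (simp add: g_def)
  also have "\<dots> \<le> (\<Sum>k. ennreal (c' * (2 powr (s - 1))^k))"
  proof (intro suminf_le allI)
    fix k
    have "(\<integral>\<^sup>+x. g k x \<partial>lborel) = ennreal (c * (a/2^(k+1)) powr (-s)) * emeasure lborel (sh k)"
      unfolding g_def by (subst mult.commute, rule nn_integral_cmult_indicator) simp
    also have "\<dots> \<le> ennreal (c * (a/2^(k+1)) powr (-s)) * ennreal ((2*a)^CARD('n) * CARD('n) * (1/2^k))"
      unfolding sh_def using assms(1) by (intro mult_left_mono emeasure_cube_shell) auto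
    also have "\<dots> = ennreal (c * (a/2^(k+1)) powr (-s) * ((2*a)^CARD('n) * CARD('n) * (1/2^k)))"
      using assms by (intro ennreal_mult[symmetric]) auto
    also have "\<dots> = ennreal (c' * (2 powr (s - 1))^k)"
      unfolding c'_def by (simp only: boundary_shell_term[OF assms(1)])
    finally show "(\<integral>\<^sup>+x. g k x \<partial>lborel) \<le> ennreal (c' * (2 powr (s - 1))^k)" .
  qed auto
  also have "\<dots> = ennreal (c' / (1 - 2 powr (s - 1)))"
    using assms by (intro suminf_ennreal_geometric) (auto simp: c'_def powr_less_one)
  finally show ?thesis by (simp add: c'_def)
qed

(* The constant 4^d / (1 - 2^-s) of frac_kernel_tail_integral times the factor of
   boundary_distance_integral. *)
definition interaction_const :: "real \<Rightarrow> nat \<Rightarrow> real" where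
  "interaction_const s d = 4^d / (1 - 2 powr (-s)) * 2^d * 2 powr s * d / (1 - 2 powr (s - 1))"

lemma interaction_const_nonneg: "0 < s \<Longrightarrow> s < 1 \<Longrightarrow> 0 \<le> interaction_const s d"
  by (simp add: interaction_const_def powr_less_one less_imp_le)

definition crossing_pairs :: "real \<Rightarrow> ((real^'n) \<times> (real^'n)) set" where
  "crossing_pairs a = (cube a 0 \<times> - cube a 0) \<union> ((- cube a 0) \<times> cube a 0)"

lemma crossing_pairs_sets [measurable]: "crossing_pairs a \<in> sets borel"
  unfolding crossing_pairs_def borel_prod[symmetric]
  by (intro sets.Un pair_measureI) (auto simp: borel_closed borel_open open_Compl)

lemma nn_integral_lborel_swap:
  fixes f :: "'a::euclidean_space \<times> 'a \<Rightarrow> ennreal"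
  assumes [measurable]: "f \<in> borel_measurable borel"
  shows "(\<integral>\<^sup>+p. f (snd p, fst p) \<partial>lborel) = (\<integral>\<^sup>+p. f p \<partial>lborel)"
proof -
  have f_meas: "f \<in> borel_measurable (lborel \<Otimes>\<^sub>M lborel)"
    by (simp add: lborel_prod)
  have swap_meas: "(\<lambda>p. f (snd p, fst p)) \<in> borel_measurable (lborel \<Otimes>\<^sub>M lborel)"
    using measurable_pair_swap[OF f_meas] by (simp add: split_beta')
  have "(\<integral>\<^sup>+p. f (snd p, fst p) \<partial>lborel) = (\<integral>\<^sup>+y. \<integral>\<^sup>+x. f (x, y) \<partial>lborel \<partial>lborel)"
    using lborel.nn_integral_fst[OF swap_meas] by (simp add: lborel_prod)
  also have "\<dots> = (\<integral>\<^sup>+p. f p \<partial>lborel)"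
    using lborel_pair.nn_integral_snd[OF f_meas] by (simp add: lborel_prod)
  finally show ?thesis .
qed

lemma cube_infnorm_subset: "cube (a - infnorm x) x \<subseteq> cube a (0::real^'n)"
proof
  fix y :: "real^'n" assume y: "y \<in> cube (a - infnorm x) x"
  have "\<bar>y$k\<bar> \<le> a" for k
  proof -
    have "\<bar>y$k - x$k\<bar> \<le> a - infnorm x" using y by (simp add: cube_def)
    moreover have "\<bar>x$k\<bar> \<le> infnorm x" by (rule component_le_infnorm_cart)
    ultimately show ?thesis by arith
  qed
  then show "y \<in> cube a 0" by (simp add: cube_def)
qed

lemma frac_kernel_outside_cube_integral:
  fixes x :: "real^'n"
  assumes "x \<in> ocube a 0" "0 < s"
  shows "(\<integral>\<^sup>+y. indicator (- cube a 0) y * ennreal (frac_kernel s (x - y)) \<partial>lborel)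
    \<le> ennreal (4^CARD('n) / (1 - 2 powr (-s)) * (a - infnorm x) powr (-s))"
proof -
  have "(\<integral>\<^sup>+y. indicator (- cube a 0) y * ennreal (frac_kernel s (x - y)) \<partial>lborel)
      \<le> (\<integral>\<^sup>+y. indicator (- cube (a - infnorm x) x) y * ennreal (frac_kernel s (x - y)) \<partial>lborel)"
    using cube_infnorm_subset[of a x] by (intro nn_integral_mono mult_right_mono) (auto simp: indicator_def)
  also have "\<dots> \<le> ennreal (4^CARD('n) / (1 - 2 powr (-s)) * (a - infnorm x) powr (-s))"
    using assms by (intro frac_kernel_tail_integral) (simp_all add: mem_ocube_0_iff_infnorm)
  finally show ?thesis .
qed

lemma cube_times_compl_sets [measurable]: "cube a (0::real^'n) \<times> - cube a 0 \<in> sets borel"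
  unfolding borel_prod[symmetric] by (intro pair_measureI) (auto simp: borel_closed borel_open open_Compl)

lemma cube_outward_interaction:
  fixes a s :: real
  assumes "0 < a" "0 < s" "s < 1"
  shows "(\<integral>\<^sup>+p. indicator (cube a (0::real^'n) \<times> - cube a 0) p * ennreal (frac_kernel s (fst p - snd p)) \<partial>lborel)
    \<le> ennreal (interaction_const s CARD('n) * a powr (real CARD('n) - s))"
proof -
  define c where "c = 4^CARD('n) / (1 - 2 powr (-s))"
  have c: "0 \<le> c" using assms by (simp add: c_def powr_less_one less_imp_le)
  define f where "f p = indicator (cube a (0::real^'n) \<times> - cube a 0) p * ennreal (frac_kernel s (fst p - snd p))" for p
  have meas: "f \<in> borel_measurable (lborel \<Otimes>\<^sub>M lborel)"
    unfolding lborel_prod f_def by simp measurable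
  have "(\<integral>\<^sup>+p. f p \<partial>lborel) = (\<integral>\<^sup>+x. \<integral>\<^sup>+y. f (x, y) \<partial>lborel \<partial>lborel)"
    using lborel.nn_integral_fst[OF meas] by (simp add: lborel_prod)
  also have "\<dots> \<le> (\<integral>\<^sup>+x. indicator (ocube a (0::real^'n)) x * ennreal (c * (a - infnorm x) powr (-s)) \<partial>lborel)"
  proof (rule nn_integral_mono_AE)
    show "AE x in lborel. (\<integral>\<^sup>+y. f (x, y) \<partial>lborel) \<le> indicator (ocube a 0) x * ennreal (c * (a - infnorm x) powr (-s))"
      using AE_not_in[OF cube_boundary_null[of a]]
    proof eventually_elim
      case (elim x)
      show ?case
      proof (cases "x \<in> ocube a 0")
        case True
        have "(\<integral>\<^sup>+y. f (x, y) \<partial>lborel)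
            = (\<integral>\<^sup>+y. indicator (- cube a 0) y * ennreal (frac_kernel s (x - y)) \<partial>lborel)"
          using True ocube_subset_cube[of a 0] by (intro nn_integral_cong) (auto simp: f_def indicator_def)
        also have "\<dots> \<le> ennreal (c * (a - infnorm x) powr (-s))"
          unfolding c_def using True assms(2) by (rule frac_kernel_outside_cube_integral)
        finally show ?thesis using True by simp
      qed (use elim in \<open>simp add: f_def indicator_def\<close>)
    qed
  qed
  also have "\<dots> \<le> ennreal (interaction_const s CARD('n) * a powr (real CARD('n) - s))"
    using boundary_distance_integral[OF assms c, where 'n='n]
    by (simp add: interaction_const_def c_def)
  finally show ?thesis unfolding f_def .
qed

lemma crossing_pairs_interaction:
  fixes a s :: real
  assumes "0 < a" "0 < s" "s < 1"
  shows "(\<integral>\<^sup>+p. indicator (crossing_pairs a :: ((real^'n) \<times> (real^'n)) set) p * ennreal (frac_kernel s (fst p - snd p)) \<partial>lborel)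
    \<le> ennreal (2 * interaction_const s CARD('n) * a powr (real CARD('n) - s))"
proof -
  define f where "f p = indicator (cube a (0::real^'n) \<times> - cube a 0) p * ennreal (frac_kernel s (fst p - snd p))" for p
  have f_meas: "f \<in> borel_measurable borel" unfolding f_def by measurable
  have "(\<lambda>p::(real^'n) \<times> (real^'n). (snd p, fst p)) \<in> borel_measurable borel"
    by (intro borel_measurable_continuous_onI continuous_intros)
  then have swap_meas: "(\<lambda>p. f (snd p, fst p)) \<in> borel_measurable borel"
    using measurable_compose f_meas by blast
  have "indicator (crossing_pairs a) p * ennreal (frac_kernel s (fst p - snd p)) \<le> f p + f (snd p, fst p)" for p
    by (auto simp: crossing_pairs_def f_def indicator_def l1norm_minus_commute)
  then have "(\<integral>\<^sup>+p. indicator (crossing_pairs a :: ((real^'n) \<times> (real^'n)) set) p * ennreal (frac_kernel s (fst p - snd p)) \<partial>lborel)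
      \<le> (\<integral>\<^sup>+p. f p + f (snd p, fst p) \<partial>lborel)"
    by (intro nn_integral_mono)
  also have "\<dots> = (\<integral>\<^sup>+p. f p \<partial>lborel) + (\<integral>\<^sup>+p. f (snd p, fst p) \<partial>lborel)"
    using f_meas swap_meas by (intro nn_integral_add) simp_all
  also have "\<dots> = 2 * (\<integral>\<^sup>+p. f p \<partial>lborel)"
    by (simp add: nn_integral_lborel_swap[OF f_meas] mult_2)
  also have "\<dots> \<le> 2 * ennreal (interaction_const s CARD('n) * a powr (real CARD('n) - s))"
    unfolding f_def by (intro mult_left_mono cube_outward_interaction assms) simp
  finally show ?thesis
    using assms by (simp add: ennreal_mult interaction_const_nonneg mult.assoc)
qed

section \<open>Pairs of lattice cells\<close>

definition lattice_box :: "int \<Rightarrow> (int^'n) set" where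
  "lattice_box m = {i. \<forall>k. \<bar>i$k\<bar> \<le> m}"

lemma finite_lattice_box: "finite (lattice_box m :: (int^'n) set)"
proof -
  have "lattice_box m \<subseteq> vec_lambda ` PiE (UNIV::'n set) (\<lambda>_. {-m..m})"
  proof
    fix i :: "int^'n" assume "i \<in> lattice_box m"
    then have bound: "\<bar>i$k\<bar> \<le> m" for k by (simp add: lattice_box_def)
    have "-m \<le> i$k \<and> i$k \<le> m" for k using bound[of k] by arith
    then have "vec_nth i \<in> PiE UNIV (\<lambda>_. {-m..m})"
      by (auto simp: PiE_iff)
    then show "i \<in> vec_lambda ` PiE (UNIV::'n set) (\<lambda>_. {-m..m})"
      by (intro image_eqI[where x="vec_nth i"]) auto
  qed
  moreover have "finite (PiE (UNIV::'n set) (\<lambda>_. {-m..m}))" by (intro finite_PiE) auto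
  ultimately show ?thesis by (meson finite_imageI finite_subset)
qed

lemma lattice_box_mono: "m \<le> n \<Longrightarrow> lattice_box m \<subseteq> lattice_box n"
  by (auto simp: lattice_box_def intro: order_trans)

lemma ex_lattice_box: "\<exists>n::nat. i \<in> lattice_box (int n)"
proof -
  have "\<bar>i$k\<bar> \<le> (\<Sum>k\<in>UNIV. \<bar>i$k\<bar>)" for k by (rule member_le_sum) auto
  then show ?thesis
    by (intro exI[where x="nat (\<Sum>k\<in>UNIV. \<bar>i$k\<bar>)"]) (auto simp: lattice_box_def intro: order_trans)
qed

lemma ex_lattice_box_pair: "\<exists>n::nat. q \<in> lattice_box (int n) \<times> lattice_box (int n)"
proof -
  obtain n1 n2 :: nat where "fst q \<in> lattice_box (int n1)" "snd q \<in> lattice_box (int n2)"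
    using ex_lattice_box by metis
  then show ?thesis
    using lattice_box_mono[of "int n1" "int (max n1 n2)"] lattice_box_mono[of "int n2" "int (max n1 n2)"]
    by (intro exI[of _ "max n1 n2"]) (auto simp: mem_Times_iff)
qed

lemma le_SUP_sum_lattice_box_pairs:
  fixes f :: "(int^'n) \<times> (int^'n) \<Rightarrow> ennreal"
  assumes "q \<in> P"
  shows "f q \<le> (SUP n. \<Sum>q\<in>P \<inter> (lattice_box (int n) \<times> lattice_box (int n)). f q)"
proof -
  obtain n where "q \<in> lattice_box (int n) \<times> lattice_box (int n)"
    using ex_lattice_box_pair[of q] by blast
  then have "f q \<le> (\<Sum>q\<in>P \<inter> (lattice_box (int n) \<times> lattice_box (int n)). f q)"
    using assms by (intro member_le_sum) (auto intro: finite_lattice_box)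
  also have "\<dots> \<le> (SUP n. \<Sum>q\<in>P \<inter> (lattice_box (int n) \<times> lattice_box (int n)). f q)"
    by (rule SUP_upper) simp
  finally show ?thesis .
qed

lemma cell_subset_cube:
  assumes "0 < e" "i \<in> lattice_box m"
  shows "cell e i \<subseteq> cube (e * (of_int m + 1/2)) (0::real^'n)"
proof
  fix x :: "real^'n" assume x: "x \<in> cell e i"
  have "\<bar>x$k\<bar> \<le> e * of_int m + e/2" for k
  proof -
    have "\<bar>x$k - e * of_int (i$k)\<bar> \<le> e/2" using x by (auto simp: cube_def site_def)
    moreover have "\<bar>e * of_int (i$k)\<bar> \<le> e * of_int m"
    proof -
      have "\<bar>i$k\<bar> \<le> m" using assms(2) by (simp add: lattice_box_def)
      then have "\<bar>real_of_int (i$k)\<bar> \<le> of_int m" by (metis of_int_abs of_int_le_iff)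
      then show ?thesis using assms(1) by (simp add: abs_mult)
    qed
    ultimately show ?thesis by arith
  qed
  then show "x \<in> cube (e * (of_int m + 1/2)) 0"
    by (simp add: cube_def algebra_simps)
qed

lemma open_cell_subset_outside_cube:
  assumes "0 < e" "j \<notin> lattice_box m"
  shows "open_cell e j \<subseteq> - cube (e * (of_int m + 1/2)) (0::real^'n)"
proof
  fix y :: "real^'n" assume y: "y \<in> open_cell e j"
  obtain k where "m < \<bar>j$k\<bar>" using assms(2) by (auto simp: lattice_box_def not_le)
  then have "m + 1 \<le> \<bar>j$k\<bar>" by simp
  then have "e * (of_int m + 1) \<le> \<bar>e * of_int (j$k)\<bar>"
    using assms(1) by (simp add: abs_mult mult_left_mono flip: of_int_abs)
  moreover have "\<bar>y$k - e * of_int (j$k)\<bar> < e/2" using y by (auto simp: ocube_def site_def)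
  moreover have "\<bar>e * of_int (j$k)\<bar> - \<bar>y$k\<bar> \<le> \<bar>y$k - e * of_int (j$k)\<bar>"
    using abs_triangle_ineq2[of "e * of_int (j$k)" "y$k"] by (simp add: abs_minus_commute)
  ultimately have "e * (of_int m + 1/2) < \<bar>y$k\<bar>" by (simp add: algebra_simps)
  then show "y \<in> - cube (e * (of_int m + 1/2)) 0" by (auto simp: cube_def not_le)
qed

lemma ex_lattice_box_covering_ocube:
  assumes "0 < e" "e \<le> R"
  obtains m where "0 \<le> m" "e * (of_int m + 1/2) \<le> 2 * R"
    "\<And>x i. x \<in> ocube R (0::real^'n) \<Longrightarrow> x \<in> cell e i \<Longrightarrow> i \<in> lattice_box m"
proof
  define m where "m = \<lceil>(R + e/2) / e\<rceil> - 1"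
  have "0 < (R + e/2) / e" using assms by simp
  then show "0 \<le> m" by (simp add: m_def)
  have "of_int m < (R + e/2) / e" unfolding m_def by linarith
  then show "e * (of_int m + 1/2) \<le> 2 * R" using assms by (simp add: field_simps)
  fix x i assume x: "x \<in> ocube R (0::real^'n)" "x \<in> cell e i"
  have "\<bar>i$k\<bar> \<le> m" for k
  proof -
    have "\<bar>x$k\<bar> < R" "\<bar>x$k - e * of_int (i$k)\<bar> \<le> e/2"
      using x by (auto simp: ocube_def cube_def site_def)
    then have "\<bar>e * of_int (i$k)\<bar> < R + e/2" by arith
    then have "e * \<bar>of_int (i$k)\<bar> < e * ((R + e/2) / e)"
      using assms(1) by (simp add: abs_mult)
    then have "of_int \<bar>i$k\<bar> < (R + e/2) / e"
      using assms(1) by (simp only: mult_less_cancel_left_pos of_int_abs)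
    then show ?thesis unfolding m_def by linarith
  qed
  then show "i \<in> lattice_box m" by (simp add: lattice_box_def)
qed

definition cell_pair :: "real \<Rightarrow> (int^'n) \<times> (int^'n) \<Rightarrow> ((real^'n) \<times> (real^'n)) set" where
  "cell_pair e q = cell e (fst q) \<times> cell e (snd q)"

lemma cell_pair_sets [measurable]: "cell_pair e q \<in> sets lebesgue"
  unfolding cell_pair_def by (intro sets_completionI_sets) (simp add: borel_closed closed_Times)

lemma Jeps_cell_pair:
  fixes K :: "real^'n \<Rightarrow> real^'n \<Rightarrow> ennreal" and i j :: "int^'n"
  shows "i \<noteq> j \<Longrightarrow> Jeps K s e i j =
    ennreal (e powr (s - real CARD('n))) * (\<integral>\<^sup>+p. K (fst p) (snd p) * indicator (cell_pair e (i, j)) p \<partial>lebesgue)"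
  by (simp add: Jeps_def LK_def cell_pair_def)

lemma sum_Jeps_eq_nn_integral:
  fixes K :: "real^'n \<Rightarrow> real^'n \<Rightarrow> ennreal" and F :: "((int^'n) \<times> (int^'n)) set"
  assumes [measurable]: "(\<lambda>p. K (fst p) (snd p)) \<in> borel_measurable lebesgue"
    and "finite F" "\<And>q. q \<in> F \<Longrightarrow> fst q \<noteq> snd q"
  shows "(\<Sum>q\<in>F. Jeps K s e (fst q) (snd q))
    = ennreal (e powr (s - real CARD('n))) * (\<integral>\<^sup>+p. (\<Sum>q\<in>F. K (fst p) (snd p) * indicator (cell_pair e q) p) \<partial>lebesgue)"
proof -
  have "(\<Sum>q\<in>F. Jeps K s e (fst q) (snd q))
      = (\<Sum>q\<in>F. ennreal (e powr (s - real CARD('n))) * (\<integral>\<^sup>+p. K (fst p) (snd p) * indicator (cell_pair e q) p \<partial>lebesgue))"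
    using assms(3) by (intro sum.cong) (simp_all add: Jeps_cell_pair)
  also have "\<dots> = ennreal (e powr (s - real CARD('n))) * (\<Sum>q\<in>F. \<integral>\<^sup>+p. K (fst p) (snd p) * indicator (cell_pair e q) p \<partial>lebesgue)"
    by (simp only: sum_distrib_left)
  also have "(\<Sum>q\<in>F. \<integral>\<^sup>+p. K (fst p) (snd p) * indicator (cell_pair e q) p \<partial>lebesgue)
      = (\<integral>\<^sup>+p. (\<Sum>q\<in>F. K (fst p) (snd p) * indicator (cell_pair e q) p) \<partial>lebesgue)"
    by (rule nn_integral_sum[symmetric]) measurable
  finally show ?thesis .
qed

lemma cell_pair_unique:
  assumes "0 < e" "fst p \<notin> grid_faces e" "snd p \<notin> grid_faces e"
    and "p \<in> cell_pair e q" "p \<in> cell_pair e q'"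
  shows "q = q'"
proof -
  have "fst p \<in> open_cell e (fst q)" "snd p \<in> open_cell e (snd q)"
    using assms(2-4) cell_off_grid_faces by (auto simp: cell_pair_def)
  then show ?thesis
    using assms(5) open_cell_cell_unique[OF assms(1)] by (auto simp: cell_pair_def prod_eq_iff)
qed

(* Exhaust P by its finite parts inside growing lattice boxes and use monotone convergence. *)
lemma LK_le_infsum_Jeps:
  fixes K :: "real^'n \<Rightarrow> real^'n \<Rightarrow> ennreal" and P :: "((int^'n) \<times> (int^'n)) set"
  assumes K_meas [measurable]: "(\<lambda>p. K (fst p) (snd p)) \<in> borel_measurable lebesgue"
    and "0 < e" and distinct: "\<And>q. q \<in> P \<Longrightarrow> fst q \<noteq> snd q"
    and covered: "AE p in lebesgue. p \<in> A \<times> B \<longrightarrow> (\<exists>q\<in>P. p \<in> cell_pair e q)"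
  shows "LK K A B \<le> ennreal (e powr (real CARD('n) - s)) * (\<Sum>\<^sub>\<infinity>q\<in>P. Jeps K s e (fst q) (snd q))"
proof -
  let ?c = "ennreal (e powr (real CARD('n) - s))"
  define S where "S n = P \<inter> (lattice_box (int n) \<times> lattice_box (int n))" for n :: nat
  define G where "G n p = (\<Sum>q\<in>S n. K (fst p) (snd p) * indicator (cell_pair e q) p)" for n p
  have finite_S: "finite (S n)" for n
    unfolding S_def by (intro finite_Int finite_cartesian_product finite_lattice_box disjI2)
  have "S m \<subseteq> S n" if "m \<le> n" for m n
    using lattice_box_mono[of "int m" "int n"] that by (auto simp: S_def)
  then have G_inc: "incseq G"
    unfolding incseq_def le_fun_def G_def by (auto intro!: sum_mono2 finite_S)
  have G_meas: "G n \<in> borel_measurable lebesgue" for n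
    unfolding G_def by measurable
  have "AE p in lebesgue. K (fst p) (snd p) * indicator (A \<times> B) p \<le> (SUP n. G n p)"
    using covered
  proof eventually_elim
    case (elim p)
    show ?case
    proof (cases "p \<in> A \<times> B")
      case True
      then obtain q where q: "q \<in> P" "p \<in> cell_pair e q" using elim by blast
      then have "K (fst p) (snd p) * indicator (A \<times> B) p = K (fst p) (snd p) * indicator (cell_pair e q) p"
        using True by simp
      also have "\<dots> \<le> (SUP n. G n p)"
        unfolding G_def S_def using q(1) by (rule le_SUP_sum_lattice_box_pairs)
      finally show ?thesis .
    qed simp
  qed
  then have "LK K A B \<le> (\<integral>\<^sup>+p. (SUP n. G n p) \<partial>lebesgue)"
    unfolding LK_def by (rule nn_integral_mono_AE)
  also have "\<dots> = (SUP n. integral\<^sup>N lebesgue (G n))"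
    by (rule nn_integral_monotone_convergence_SUP[OF G_inc G_meas])
  also have "\<dots> \<le> ?c * (\<Sum>\<^sub>\<infinity>q\<in>P. Jeps K s e (fst q) (snd q))"
  proof (rule SUP_least)
    fix n
    have "?c * ennreal (e powr (s - real CARD('n))) = 1"
      using \<open>0 < e\<close> by (simp add: ennreal_mult[symmetric] powr_add[symmetric])
    moreover have "(\<Sum>q\<in>S n. Jeps K s e (fst q) (snd q)) = ennreal (e powr (s - real CARD('n))) * integral\<^sup>N lebesgue (G n)"
      unfolding G_def using distinct by (intro sum_Jeps_eq_nn_integral K_meas finite_S) (auto simp: S_def)
    ultimately have "integral\<^sup>N lebesgue (G n) = ?c * (\<Sum>q\<in>S n. Jeps K s e (fst q) (snd q))"
      by (simp add: mult.assoc[symmetric])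
    also have "\<dots> = ?c * (\<Sum>\<^sub>\<infinity>q\<in>S n. Jeps K s e (fst q) (snd q))"
      by (simp add: finite_S)
    also have "\<dots> \<le> ?c * (\<Sum>\<^sub>\<infinity>q\<in>P. Jeps K s e (fst q) (snd q))"
      by (intro mult_left_mono infsum_mono_neutral) (auto simp: S_def intro: nonneg_summable_on_complete)
    finally show "integral\<^sup>N lebesgue (G n) \<le> ?c * (\<Sum>\<^sub>\<infinity>q\<in>P. Jeps K s e (fst q) (snd q))" .
  qed
  finally show ?thesis .
qed

lemma sum_cell_pair_indicator_le:
  fixes c :: ennreal
  assumes "0 < e" "fst p \<notin> grid_faces e" "snd p \<notin> grid_faces e" "finite F"
    and inside: "\<And>q. q \<in> F \<Longrightarrow> p \<in> cell_pair e q \<Longrightarrow> p \<in> D"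
  shows "(\<Sum>q\<in>F. c * indicator (cell_pair e q) p) \<le> c * indicator D p"
proof (cases "\<exists>q\<in>F. p \<in> cell_pair e q")
  case True
  then obtain q where q: "q \<in> F" "p \<in> cell_pair e q" by blast
  have "(\<Sum>q'\<in>F. c * indicator (cell_pair e q') p) = (\<Sum>q'\<in>F. if q' = q then c else 0)"
  proof (rule sum.cong)
    fix q'
    have "p \<in> cell_pair e q' \<longleftrightarrow> q' = q"
      using cell_pair_unique[OF assms(1-3)] q(2) by blast
    then show "c * indicator (cell_pair e q') p = (if q' = q then c else 0)"
      by (simp add: indicator_def)
  qed simp
  also have "\<dots> = c"
    using q(1) \<open>finite F\<close> by simp
  finally show ?thesis using q inside by (simp add: indicator_def)
next
  case False
  then have "(\<Sum>q\<in>F. c * indicator (cell_pair e q) p) = 0"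
    by (intro sum.neutral) simp
  then show ?thesis by simp
qed

lemma sum_Jeps_le_LK_region:
  fixes K :: "real^'n \<Rightarrow> real^'n \<Rightarrow> ennreal" and F :: "((int^'n) \<times> (int^'n)) set"
  assumes K_meas [measurable]: "(\<lambda>p. K (fst p) (snd p)) \<in> borel_measurable lebesgue"
    and "0 < e" "finite F" and distinct: "\<And>q. q \<in> F \<Longrightarrow> fst q \<noteq> snd q"
    and inside: "\<And>q p. q \<in> F \<Longrightarrow> p \<in> cell_pair e q \<Longrightarrow> fst p \<notin> grid_faces e \<Longrightarrow> snd p \<notin> grid_faces e \<Longrightarrow> p \<in> D"
  shows "(\<Sum>q\<in>F. Jeps K s e (fst q) (snd q))
    \<le> ennreal (e powr (s - real CARD('n))) * (\<integral>\<^sup>+p. K (fst p) (snd p) * indicator D p \<partial>lebesgue)"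
proof -
  have "AE p in lebesgue. (\<Sum>q\<in>F. K (fst p) (snd p) * indicator (cell_pair e q) p) \<le> K (fst p) (snd p) * indicator D p"
    using AE_off_grid_faces[of e]
  proof eventually_elim
    case (elim p)
    then show ?case
      using \<open>0 < e\<close> \<open>finite F\<close> inside[of _ p] by (intro sum_cell_pair_indicator_le) auto
  qed
  then have "(\<integral>\<^sup>+p. (\<Sum>q\<in>F. K (fst p) (snd p) * indicator (cell_pair e q) p) \<partial>lebesgue)
      \<le> (\<integral>\<^sup>+p. K (fst p) (snd p) * indicator D p \<partial>lebesgue)"
    by (rule nn_integral_mono_AE)
  then show ?thesis
    using sum_Jeps_eq_nn_integral[OF K_meas \<open>finite F\<close> distinct] by (simp add: mult_left_mono)
qed

section \<open>Energy bounds\<close>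

lemma cell_pair_crossing:
  assumes "0 < e" "(fst q \<in> lattice_box m) \<noteq> (snd q \<in> lattice_box m)"
    and "p \<in> cell_pair e q" "fst p \<notin> grid_faces e" "snd p \<notin> grid_faces e"
  shows "p \<in> crossing_pairs (e * (of_int m + 1/2))"
proof -
  have cells: "fst p \<in> cell e (fst q)" "snd p \<in> cell e (snd q)"
    using assms(3) by (auto simp: cell_pair_def mem_Times_iff)
  then have open_cells: "fst p \<in> open_cell e (fst q)" "snd p \<in> open_cell e (snd q)"
    using assms(4,5) cell_off_grid_faces by auto
  consider "fst q \<in> lattice_box m" "snd q \<notin> lattice_box m" | "fst q \<notin> lattice_box m" "snd q \<in> lattice_box m"
    using assms(2) by blast
  then show ?thesis
  proof cases
    case 1
    then show ?thesis
      using cells(1) open_cells(2) cell_subset_cube[OF assms(1) 1(1)] open_cell_subset_outside_cube[OF assms(1) 1(2)]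
      by (auto simp: crossing_pairs_def mem_Times_iff)
  next
    case 2
    then show ?thesis
      using cells(2) open_cells(1) cell_subset_cube[OF assms(1) 2(2)] open_cell_subset_outside_cube[OF assms(1) 2(1)]
      by (auto simp: crossing_pairs_def mem_Times_iff)
  qed
qed

lemma LK_crossing_pairs_le:
  fixes K :: "real^'n \<Rightarrow> real^'n \<Rightarrow> ennreal"
  assumes "K2 s lam Lam K" "0 < a" "0 < s" "s < 1" "0 \<le> Lam"
  shows "(\<integral>\<^sup>+p. K (fst p) (snd p) * indicator (crossing_pairs a) p \<partial>lebesgue)
    \<le> ennreal (2 * Lam * interaction_const s CARD('n) * a powr (real CARD('n) - s))"
proof -
  let ?k = "\<lambda>p. indicator (crossing_pairs a :: ((real^'n) \<times> (real^'n)) set) p * ennreal (frac_kernel s (fst p - snd p))"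
  have "AE p in lebesgue. K (fst p) (snd p) * indicator (crossing_pairs a) p \<le> ennreal Lam * ?k p"
    using assms(1) unfolding K2_def
    by (elim eventually_mono) (auto simp: indicator_def ennreal_mult assms(5))
  then have "(\<integral>\<^sup>+p. K (fst p) (snd p) * indicator (crossing_pairs a) p \<partial>lebesgue)
      \<le> (\<integral>\<^sup>+p. ennreal Lam * ?k p \<partial>lborel)"
    by (subst nn_integral_completion[symmetric]) (auto intro: nn_integral_mono_AE)
  also have "\<dots> = ennreal Lam * (\<integral>\<^sup>+p. ?k p \<partial>lborel)"
    by (rule nn_integral_cmult) simp
  also have "\<dots> \<le> ennreal Lam * ennreal (2 * interaction_const s CARD('n) * a powr (real CARD('n) - s))"
    using assms by (intro mult_left_mono crossing_pairs_interaction) auto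
  finally show ?thesis
    using assms by (simp add: ennreal_mult[symmetric] interaction_const_nonneg mult_ac)
qed

lemma AE_cell_pair_opposite_spins:
  assumes "0 < e" "spin_config u" "A \<subseteq> Eset u e" "B \<inter> Eset u e = {}"
    and \<Gamma>: "\<And>x i. x \<in> \<Omega> \<Longrightarrow> x \<in> cell e i \<Longrightarrow> i \<in> \<Gamma>" and AB: "A \<subseteq> \<Omega> \<or> B \<subseteq> \<Omega>"
  shows "AE p in lebesgue. p \<in> A \<times> B \<longrightarrow>
    (\<exists>q. (fst q \<in> \<Gamma> \<or> snd q \<in> \<Gamma>) \<and> u (fst q) = 1 \<and> u (snd q) = -1 \<and> p \<in> cell_pair e q)"
  using AE_off_grid_faces[of e]
proof eventually_elim
  case (elim p)
  show ?case
  proof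
    assume "p \<in> A \<times> B"
    then have x: "fst p \<in> A" and y: "snd p \<in> B" by auto
    obtain i where i: "u i = 1" "fst p \<in> open_cell e i" using x assms(3) unfolding Eset_def by blast
    obtain j where j: "snd p \<in> open_cell e j" using ex_open_cell[OF \<open>0 < e\<close>] elim by blast
    have "u j = -1" using j y assms(2,4) unfolding Eset_def spin_config_def by blast
    moreover have cells: "fst p \<in> cell e i" "snd p \<in> cell e j"
      using subsetD[OF ocube_subset_cube] i(2) j by blast+
    then have "i \<in> \<Gamma> \<or> j \<in> \<Gamma>" using AB x y \<Gamma> by blast
    moreover have "p \<in> cell_pair e (i, j)"
      using cells by (simp add: cell_pair_def mem_Times_iff)
    ultimately show "\<exists>q. (fst q \<in> \<Gamma> \<or> snd q \<in> \<Gamma>) \<and> u (fst q) = 1 \<and> u (snd q) = -1 \<and> p \<in> cell_pair e q"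
      using i(1) by (intro exI[of _ "(i, j)"]) simp
  qed
qed

lemma LK_le_Hloc:
  fixes K :: "real^'n \<Rightarrow> real^'n \<Rightarrow> ennreal"
  assumes K_meas: "(\<lambda>p. K (fst p) (snd p)) \<in> borel_measurable lebesgue"
    and "0 < e" "spin_config u" "A \<subseteq> Eset u e" "B \<inter> Eset u e = {}"
    and "\<And>x i. x \<in> \<Omega> \<Longrightarrow> x \<in> cell e i \<Longrightarrow> i \<in> \<Gamma>" "A \<subseteq> \<Omega> \<or> B \<subseteq> \<Omega>"
  shows "LK K A B \<le> ennreal (e powr (real CARD('n) - s)) * Hloc K s e \<Gamma> u"
proof -
  define P where "P = {q. (fst q \<in> \<Gamma> \<or> snd q \<in> \<Gamma>) \<and> u (fst q) = 1 \<and> u (snd q) = -1}"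
  have "AE p in lebesgue. p \<in> A \<times> B \<longrightarrow> (\<exists>q\<in>P. p \<in> cell_pair e q)"
    using AE_cell_pair_opposite_spins[OF assms(2-7)] by (simp add: P_def)
  then have "LK K A B \<le> ennreal (e powr (real CARD('n) - s)) * (\<Sum>\<^sub>\<infinity>q\<in>P. Jeps K s e (fst q) (snd q))"
    using K_meas \<open>0 < e\<close> by (intro LK_le_infsum_Jeps) (auto simp: P_def)
  also have "(\<Sum>\<^sub>\<infinity>q\<in>P. Jeps K s e (fst q) (snd q)) \<le> Hloc K s e \<Gamma> u"
    unfolding Hloc_def
  proof (rule infsum_mono_neutral)
    fix q assume "q \<in> P \<inter> {p. fst p \<in> \<Gamma> \<or> snd p \<in> \<Gamma>}"
    then have "Jeps K s e (fst q) (snd q) * ennreal (1 - u (fst q) * u (snd q)) = Jeps K s e (fst q) (snd q) * 2"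
      by (simp add: P_def)
    then show "Jeps K s e (fst q) (snd q) \<le> Jeps K s e (fst q) (snd q) * ennreal (1 - u (fst q) * u (snd q))"
      by (simp add: mult_2_right)
  qed (auto simp: P_def intro: nonneg_summable_on_complete)
  then have "ennreal (e powr (real CARD('n) - s)) * (\<Sum>\<^sub>\<infinity>q\<in>P. Jeps K s e (fst q) (snd q))
      \<le> ennreal (e powr (real CARD('n) - s)) * Hloc K s e \<Gamma> u"
    by (rule mult_left_mono) simp
  finally show ?thesis .
qed

lemma PerK_le_Hloc:
  fixes K :: "real^'n \<Rightarrow> real^'n \<Rightarrow> ennreal"
  assumes "(\<lambda>p. K (fst p) (snd p)) \<in> borel_measurable lebesgue"
    and "0 < e" "spin_config u" "\<And>x i. x \<in> \<Omega> \<Longrightarrow> x \<in> cell e i \<Longrightarrow> i \<in> \<Gamma>"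
  shows "PerK K (Eset u e) \<Omega> \<le> 3 * (ennreal (e powr (real CARD('n) - s)) * Hloc K s e \<Gamma> u)"
proof -
  let ?H = "ennreal (e powr (real CARD('n) - s)) * Hloc K s e \<Gamma> u"
  have LK_bound: "LK K A B \<le> ?H" if "A \<subseteq> Eset u e" "B \<inter> Eset u e = {}" "A \<subseteq> \<Omega> \<or> B \<subseteq> \<Omega>" for A B
    using assms that by (intro LK_le_Hloc[where \<Omega>=\<Omega>]) auto
  then have "PerK K (Eset u e) \<Omega> \<le> ?H + ?H + ?H"
    unfolding PerK_def by (intro add_mono LK_bound) auto
  also have "\<dots> = 3 * ?H"
  proof -
    have "(3::ennreal) = 1 + 1 + 1" by simp
    then show ?thesis by (simp only: distrib_right mult_1)
  qed
  finally show ?thesis .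
qed

lemma Jeps_energy_term_le:
  "spin_config v \<Longrightarrow> Jeps K s e i j * ennreal (1 - v i * v j) \<le> 2 * Jeps K s e i j"
proof -
  assume "spin_config v"
  then have "v i = 1 \<or> v i = -1" "v j = 1 \<or> v j = -1" by (auto simp: spin_config_def)
  then have "ennreal (1 - v i * v j) \<le> ennreal 2" by (intro ennreal_leI) auto
  then have "ennreal (1 - v i * v j) \<le> 2" by simp
  then show ?thesis by (subst mult.commute) (rule mult_right_mono, simp_all)
qed

lemma Hloc_flipped_box_le_crossing:
  fixes K :: "real^'n \<Rightarrow> real^'n \<Rightarrow> ennreal" and v :: "int^'n \<Rightarrow> real" and m :: int
  assumes K_meas: "(\<lambda>p. K (fst p) (snd p)) \<in> borel_measurable lebesgue"
    and "0 < e" "spin_config v" and v1: "\<And>i. i \<in> lattice_box m \<Longrightarrow> v i = 1"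
  shows "Hloc K s e (lattice_box m) v \<le> 2 * (ennreal (e powr (s - real CARD('n)))
    * (\<integral>\<^sup>+p. K (fst p) (snd p) * indicator (crossing_pairs (e * (of_int m + 1/2))) p \<partial>lebesgue))"
  unfolding Hloc_def
proof (rule infsum_le_finite_sums)
  define P where "P = {q :: (int^'n) \<times> (int^'n). (fst q \<in> lattice_box m) \<noteq> (snd q \<in> lattice_box m)}"
  let ?J = "\<lambda>q. Jeps K s e (fst q) (snd q)"
  fix F :: "((int^'n) \<times> (int^'n)) set"
  assume F: "finite F" "F \<subseteq> {p. fst p \<in> lattice_box m \<or> snd p \<in> lattice_box m}"
  have "(\<Sum>q\<in>F. ?J q * ennreal (1 - v (fst q) * v (snd q))) = (\<Sum>q\<in>F \<inter> P. ?J q * ennreal (1 - v (fst q) * v (snd q)))"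
    using F v1 by (intro sum.mono_neutral_right) (auto simp: P_def)
  also have "\<dots> \<le> (\<Sum>q\<in>F \<inter> P. 2 * ?J q)"
    using \<open>spin_config v\<close> by (intro sum_mono Jeps_energy_term_le)
  also have "\<dots> = 2 * (\<Sum>q\<in>F \<inter> P. ?J q)"
    by (simp add: sum_distrib_left)
  also have "(\<Sum>q\<in>F \<inter> P. ?J q) \<le> ennreal (e powr (s - real CARD('n)))
      * (\<integral>\<^sup>+p. K (fst p) (snd p) * indicator (crossing_pairs (e * (of_int m + 1/2))) p \<partial>lebesgue)"
    using F(1) \<open>0 < e\<close> K_meas cell_pair_crossing[OF \<open>0 < e\<close>, of _ m]
    by (intro sum_Jeps_le_LK_region) (auto simp: P_def)
  finally show "(\<Sum>q\<in>F. ?J q * ennreal (1 - v (fst q) * v (snd q))) \<le> 2 * (ennreal (e powr (s - real CARD('n)))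
      * (\<integral>\<^sup>+p. K (fst p) (snd p) * indicator (crossing_pairs (e * (of_int m + 1/2))) p \<partial>lebesgue))"
    by (simp add: mult_left_mono)
qed (intro nonneg_summable_on_complete, simp)

lemma Hloc_flipped_box_le:
  fixes K :: "real^'n \<Rightarrow> real^'n \<Rightarrow> ennreal" and v :: "int^'n \<Rightarrow> real" and m :: int
  assumes "(\<lambda>p. K (fst p) (snd p)) \<in> borel_measurable lebesgue"
    and "0 < e" "spin_config v" "\<And>i. i \<in> lattice_box m \<Longrightarrow> v i = 1"
    and "0 \<le> m" "K2 s lam Lam K" "0 \<le> Lam" "0 < s" "s < 1"
  shows "ennreal (e powr (real CARD('n) - s)) * Hloc K s e (lattice_box m) v
    \<le> ennreal (4 * Lam * interaction_const s CARD('n) * (e * (of_int m + 1/2)) powr (real CARD('n) - s))"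
proof -
  define a where "a = e * (of_int m + 1/2)"
  let ?I = "\<integral>\<^sup>+p. K (fst p) (snd p) * indicator (crossing_pairs a) p \<partial>lebesgue"
  let ?e = "ennreal (e powr (s - real CARD('n)))"
  have "ennreal (e powr (real CARD('n) - s)) * Hloc K s e (lattice_box m) v
      \<le> ennreal (e powr (real CARD('n) - s)) * (2 * (?e * ?I))"
    using Hloc_flipped_box_le_crossing[OF assms(1-4)] by (simp add: a_def mult_left_mono)
  also have "\<dots> = 2 * ((ennreal (e powr (real CARD('n) - s)) * ?e) * ?I)"
    by (simp only: mult_ac)
  also have "\<dots> = 2 * ?I"
    using \<open>0 < e\<close> by (simp add: ennreal_mult[symmetric] powr_add[symmetric])
  also have "\<dots> \<le> 2 * ennreal (2 * Lam * interaction_const s CARD('n) * a powr (real CARD('n) - s))"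
    using assms by (intro mult_left_mono LK_crossing_pairs_le) (auto simp: a_def)
  also have "\<dots> = ennreal (4 * Lam * interaction_const s CARD('n) * a powr (real CARD('n) - s))"
  proof -
    have "4 * Lam * interaction_const s CARD('n) * a powr (real CARD('n) - s)
        = 2 * (2 * Lam * interaction_const s CARD('n) * a powr (real CARD('n) - s))"
      by (simp add: algebra_simps)
    then show ?thesis by (simp only: ennreal_mult'[of 2] ennreal_numeral zero_le_numeral)
  qed
  finally show ?thesis by (simp add: a_def)
qed

lemma ground_state_Hloc_box_le:
  fixes K :: "real^'n \<Rightarrow> real^'n \<Rightarrow> ennreal"
  assumes "(\<lambda>p. K (fst p) (snd p)) \<in> borel_measurable lebesgue" "K2 s lam Lam K"
    and "0 \<le> Lam" "0 < s" "s < 1" "0 < e" "0 \<le> m" and u: "ground_state K s e u"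
  shows "ennreal (e powr (real CARD('n) - s)) * Hloc K s e (lattice_box m) u
    \<le> ennreal (4 * Lam * interaction_const s CARD('n) * (e * (of_int m + 1/2)) powr (real CARD('n) - s))"
proof -
  define v where "v i = (if i \<in> lattice_box m then 1 else u i)" for i
  have v: "spin_config v"
    using u by (auto simp: ground_state_def spin_config_def v_def)
  have "Hloc K s e (lattice_box m) u \<le> Hloc K s e (lattice_box m) v"
    using u v by (auto simp: ground_state_def v_def finite_lattice_box)
  then have "ennreal (e powr (real CARD('n) - s)) * Hloc K s e (lattice_box m) u
      \<le> ennreal (e powr (real CARD('n) - s)) * Hloc K s e (lattice_box m) v"
    by (rule mult_left_mono) simp
  also have "\<dots> \<le> ennreal (4 * Lam * interaction_const s CARD('n) * (e * (of_int m + 1/2)) powr (real CARD('n) - s))"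
    using assms v by (intro Hloc_flipped_box_le) (auto simp: v_def)
  finally show ?thesis .
qed

lemma powr_le_pow2_mult_powr:
  fixes a R t :: real
  assumes "0 < a" "a \<le> 2 * R" "0 \<le> t" "t \<le> real n"
  shows "a powr t \<le> 2^n * R powr t"
proof -
  have "a powr t \<le> (2 * R) powr t" using assms by (intro powr_mono2) auto
  also have "\<dots> = 2 powr t * R powr t" using assms by (simp add: powr_mult)
  also have "2 powr t \<le> 2^n" using assms powr_mono[of t "real n" 2] by (simp add: powr_realpow)
  then have "2 powr t * R powr t \<le> 2^n * R powr t" by (rule mult_right_mono) simp
  finally show ?thesis .
qed

lemma PerK_Eset_le:
  fixes K :: "real^'n \<Rightarrow> real^'n \<Rightarrow> ennreal"
  assumes K_meas: "(\<lambda>p. K (fst p) (snd p)) \<in> borel_measurable lebesgue" and "K2 s lam Lam K"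
    and "0 \<le> Lam" "0 < s" "s < 1" and e: "0 < e" "e \<le> R" and u: "ground_state K s e u"
  shows "PerK K (Eset u e) (ocube R 0)
    \<le> ennreal (12 * Lam * interaction_const s CARD('n) * 2 ^ CARD('n) * R powr (real CARD('n) - s))"
proof -
  let ?t = "real CARD('n) - s"
  obtain m where m: "0 \<le> m" "e * (of_int m + 1/2) \<le> 2 * R"
    and \<Gamma>: "\<And>x i. x \<in> ocube R (0::real^'n) \<Longrightarrow> x \<in> cell e i \<Longrightarrow> i \<in> lattice_box m"
    using ex_lattice_box_covering_ocube[OF e] by blast
  let ?X = "4 * Lam * interaction_const s CARD('n) * (e * (of_int m + 1/2)) powr ?t"
  have "(1::real) \<le> real CARD('n)"
    by (simp add: Suc_le_eq)
  then have "s \<le> real CARD('n)"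
    using \<open>s < 1\<close> by linarith
  then have "(e * (of_int m + 1/2)) powr ?t \<le> 2 ^ CARD('n) * R powr ?t"
    using m e \<open>0 < s\<close> by (intro powr_le_pow2_mult_powr) auto
  then have "(12 * Lam * interaction_const s CARD('n)) * (e * (of_int m + 1/2)) powr ?t
      \<le> (12 * Lam * interaction_const s CARD('n)) * (2 ^ CARD('n) * R powr ?t)"
    using assms by (intro mult_left_mono) (auto simp: interaction_const_nonneg)
  then have arith: "3 * ?X \<le> 12 * Lam * interaction_const s CARD('n) * 2 ^ CARD('n) * R powr ?t"
    by (simp add: algebra_simps)
  have "PerK K (Eset u e) (ocube R 0) \<le> 3 * (ennreal (e powr ?t) * Hloc K s e (lattice_box m) u)"
    using u by (intro PerK_le_Hloc[OF K_meas e(1) _ \<Gamma>]) (simp add: ground_state_def)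
  also have "\<dots> \<le> 3 * ennreal ?X"
    using assms m by (intro mult_left_mono ground_state_Hloc_box_le) auto
  also have "\<dots> = ennreal (3 * ?X)"
    by (simp only: ennreal_mult'[of 3] ennreal_numeral zero_le_numeral)
  also have "\<dots> \<le> ennreal (12 * Lam * interaction_const s CARD('n) * 2 ^ CARD('n) * R powr ?t)"
    by (rule ennreal_leI[OF arith])
  finally show ?thesis .
qed

theorem mainTheorem19:
  fixes s lam Lam :: real
  assumes "CARD('n::finite) \<ge> 2"
    and "0 < s" and "s < 1" and "0 < lam" and "lam \<le> Lam"
  shows "\<exists>C\<ge>1. \<forall>K :: real^'n \<Rightarrow> real^'n \<Rightarrow> ennreal.
     (\<lambda>p. K (fst p) (snd p)) \<in> borel_measurable lebesgue \<longrightarrow> K1 K \<longrightarrow> K2 s lam Lam K \<longrightarrow>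
     (\<forall>\<epsilon>. 0 < \<epsilon> \<longrightarrow> \<epsilon> < 1 \<longrightarrow> (\<forall>u. ground_state K s \<epsilon> u \<longrightarrow>
        (\<forall>R\<ge>1. PerK K (Eset u \<epsilon>) (ocube R 0) \<le> ennreal (C * R powr (real CARD('n) - s)))))"
proof -
  define C where "C = max 1 (12 * Lam * interaction_const s CARD('n) * 2 ^ CARD('n))"
  have "PerK K (Eset u e) (ocube R 0) \<le> ennreal (C * R powr (real CARD('n) - s))"
    if "(\<lambda>p. K (fst p) (snd p)) \<in> borel_measurable lebesgue" "K2 s lam Lam K"
      "0 < e" "e < 1" "ground_state K s e u" "1 \<le> R"
    for K :: "real^'n \<Rightarrow> real^'n \<Rightarrow> ennreal" and e u R
  proof -
    have "PerK K (Eset u e) (ocube R 0)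
        \<le> ennreal (12 * Lam * interaction_const s CARD('n) * 2 ^ CARD('n) * R powr (real CARD('n) - s))"
      using that assms by (intro PerK_Eset_le) auto
    also have "\<dots> \<le> ennreal (C * R powr (real CARD('n) - s))"
      by (intro ennreal_leI mult_right_mono) (auto simp: C_def)
    finally show ?thesis .
  qed
  then show ?thesis
    by (intro exI[of _ C]) (auto simp: C_def)
qed

end
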